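(* Let $y\ge1$ and let $k\ge2$ be an integer. For $\Re s>1$ let $f_y(s)=\sum_{n>y}\mu(n)n^{-s}$, and let $\sum_{d=1}^\infty a_d d^{-s}$ be the Dirichlet series of $\zeta(s)f_y(ks)$ (valid for $\Re s>1$). Then $|a_d|\le y$ for every $d\ge1$.
   Context: $\mu$ denotes the Möbius function and $\zeta$ the Riemann zeta-function; the sum defining $f_y$ runs over integers $n>y$. *)

theory Defs
  imports "HOL-Analysis.Analysis" "HOL-Computational_Algebra.Squarefree"
begin

definition moebius_mu :: "nat \<Rightarrow> int" where
  "moebius_mu n = (if n = 0 \<or> \<not> squarefree n then 0 else (-1) ^ card (prime_factors n))"

text \<open>Riemann zeta function on the half-plane Re s > 1, given by its Dirichlet series.\<close>
definition zeta :: "complex \<Rightarrow> complex" where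
  "zeta s = infsum (\<lambda>n::nat. of_nat n powr (-s)) {1..}"

definition f_tail :: "real \<Rightarrow> complex \<Rightarrow> complex" where
  "f_tail y s = infsum (\<lambda>n::nat. of_int (moebius_mu n) * of_nat n powr (-s)) {n. real n > y}"

end

theory Submission
  imports Defs
begin

text \<open>Multiplying out, zeta(s) f_y(ks) is the Dirichlet series with coefficients
  a_d = sum of mu(m) over the m > y with m^k dividing d, and a Dirichlet series is determined
  by its values at s = 2, 3, 4, ... If no such m exists, a_d = 0. Otherwise some prime power
  p^k divides d, so the sum of mu(m) over all m with m^k dividing d vanishes (it is the
  indicator of d being k-free), and a_d is minus the sum over the at most y indices m \<le> y.\<close>

lemma abs_moebius_mu_le: "\<bar>moebius_mu n\<bar> \<le> 1"
  by (simp add: moebius_mu_def)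

lemma moebius_mu_eq_0_if_prime_square_dvd:
  assumes "prime (p::nat)" "p^2 dvd m"
  shows "moebius_mu m = 0"
  using assms not_prime_unit by (auto simp: moebius_mu_def squarefree_def)

lemma moebius_mu_prime_mult:
  assumes p: "prime (p::nat)" and "\<not> p dvd m" and "m > 0"
  shows "moebius_mu (p * m) = - moebius_mu m"
proof -
  have "coprime p m" using assms by (simp add: prime_imp_coprime)
  then have "squarefree (p * m) \<longleftrightarrow> squarefree m"
    using p squarefree_mult_coprime squarefree_multD(2) squarefree_prime by blast
  moreover have "prime_factors (p * m) = insert p (prime_factors m)"
    using prime_factors_product[of p m] assms by (auto simp: prime_prime_factors)
  moreover have "p \<notin> prime_factors m" using assms by auto
  ultimately show ?thesis using assms by (auto simp: moebius_mu_def)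
qed

text \<open>Multiplication by p is a bijection from the members of S prime to p onto the members
  divisible by p exactly once; all other members are divisible by p^2.\<close>
lemma sum_moebius_mu_eq_0:
  assumes fin: "finite S" and p: "prime (p::nat)" and "0 \<notin> S"
    and mult_closed: "\<And>m. m \<in> S \<Longrightarrow> \<not> p dvd m \<Longrightarrow> p * m \<in> S"
    and div_closed: "\<And>m. m \<in> S \<Longrightarrow> p dvd m \<Longrightarrow> m div p \<in> S"
  shows "(\<Sum>m\<in>S. moebius_mu m) = 0"
proof -
  define A where "A = {m\<in>S. \<not> p dvd m}"
  define B where "B = {m\<in>S. p dvd m \<and> \<not> p^2 dvd m}"
  have p0: "p > 0" using p prime_gt_0_nat by blast
  have "B = (*) p ` A"
  proof (intro equalityI subsetI)
    fix x assume "x \<in> (*) p ` A"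
    then show "x \<in> B" using p0 mult_closed by (auto simp: A_def B_def power2_eq_square)
  next
    fix x assume x: "x \<in> B"
    then have "\<not> p dvd x div p" by (auto simp: B_def power2_eq_square elim!: dvdE)
    then have "x div p \<in> A" using x div_closed by (auto simp: A_def B_def)
    moreover have "x = p * (x div p)" using x by (simp add: B_def)
    ultimately show "x \<in> (*) p ` A" by blast
  qed
  have "(\<Sum>m\<in>S. moebius_mu m) = (\<Sum>m\<in>A \<union> B. moebius_mu m)"
    by (rule sum.mono_neutral_right)
      (use fin p in \<open>auto simp: A_def B_def intro: moebius_mu_eq_0_if_prime_square_dvd\<close>)
  also have "\<dots> = (\<Sum>m\<in>A. moebius_mu m) + (\<Sum>m\<in>A. moebius_mu (p * m))"
    using fin p0 \<open>B = (*) p ` A\<close>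
    by (subst sum.union_disjoint) (auto simp: A_def B_def sum.reindex inj_on_def)
  also have "(\<Sum>m\<in>A. moebius_mu (p * m)) = (\<Sum>m\<in>A. - moebius_mu m)"
    by (rule sum.cong) (use \<open>0 \<notin> S\<close> p in \<open>auto simp: A_def intro!: moebius_mu_prime_mult intro: gr0I\<close>)
  finally show ?thesis by (simp add: sum_negf)
qed

lemma power_dvd_imp_le:
  assumes "m^k dvd d" "d > 0" "k \<ge> 1"
  shows "m \<le> (d::nat)"
proof -
  have "m \<le> m^k" using assms(3) by (cases "m = 0") (auto intro: self_le_power)
  also have "\<dots> \<le> d" using assms by (simp add: dvd_imp_le)
  finally show ?thesis .
qed

lemma finite_power_divisors:
  "d > 0 \<Longrightarrow> k \<ge> 1 \<Longrightarrow> finite {m::nat. P m \<and> m^k dvd d}"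
  by (rule finite_subset[of _ "{..d}"]) (auto dest: power_dvd_imp_le)

lemma sum_moebius_mu_power_divisors_eq_0:
  assumes p: "prime (p::nat)" and "p^k dvd d" "d > 0" "k \<ge> 1"
  shows "(\<Sum>m | m > 0 \<and> m^k dvd d. moebius_mu m) = 0"
proof (rule sum_moebius_mu_eq_0[OF finite_power_divisors p])
  fix m assume m: "m \<in> {m. m > 0 \<and> m^k dvd d}" "\<not> p dvd m"
  have "coprime (p^k) (m^k)" using p m(2) by (simp add: prime_imp_coprime)
  then have "p^k * m^k dvd d" using assms m(1) by (simp add: divides_mult)
  then show "p * m \<in> {m. m > 0 \<and> m^k dvd d}" using m p by (simp add: power_mult_distrib prime_gt_0_nat)
next
  fix m assume m: "m \<in> {m. m > 0 \<and> m^k dvd d}" "p dvd m"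
  then have "(m div p)^k dvd m^k" by (metis dvd_div_mult_self dvd_power_same dvd_triv_left)
  moreover have "m div p > 0" using m p by (auto simp: dvd_div_eq_0_iff intro!: gr0I)
  ultimately show "m div p \<in> {m. m > 0 \<and> m^k dvd d}" using m by (auto dest: dvd_trans)
qed (use assms in auto)

definition tail_coeff :: "real \<Rightarrow> nat \<Rightarrow> nat \<Rightarrow> int" where
  "tail_coeff y k d = (\<Sum>m | y < real m \<and> m^k dvd d. moebius_mu m)"

lemma abs_tail_coeff_le:
  assumes y: "y \<ge> 1" and k: "k \<ge> 1" and d: "d > 0"
  shows "\<bar>real_of_int (tail_coeff y k d)\<bar> \<le> y"
proof (cases "\<exists>m. y < real m \<and> m^k dvd d")
  case False
  then have "{m. y < real m \<and> m^k dvd d} = {}" by blast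
  then show ?thesis using y unfolding tail_coeff_def by (simp only:) simp
next
  case True
  then obtain m0 where m0: "real m0 > y" "m0^k dvd d" by blast
  have "m0 \<noteq> 1" using m0 y by auto
  then obtain p where p: "prime p" "p dvd m0" using prime_factor_nat by blast
  have "p^k dvd d" using m0(2) p(2) dvd_power_same dvd_trans by blast
  define S where "S = {m::nat. m > 0 \<and> m^k dvd d}"
  define L where "L = {m \<in> S. real m \<le> y}"
  have fin: "finite S" unfolding S_def using finite_power_divisors[OF d k] by simp
  have "{m. y < real m \<and> m^k dvd d} = S - L" using y by (auto simp: S_def L_def)
  then have "tail_coeff y k d = (\<Sum>m\<in>S. moebius_mu m) - (\<Sum>m\<in>L. moebius_mu m)"
    unfolding tail_coeff_def using fin by (simp add: sum_diff L_def)
  also have "(\<Sum>m\<in>S. moebius_mu m) = 0"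
    unfolding S_def by (rule sum_moebius_mu_power_divisors_eq_0[OF p(1)]) fact+
  finally have "\<bar>tail_coeff y k d\<bar> \<le> (\<Sum>m\<in>L. \<bar>moebius_mu m\<bar>)"
    by simp
  also have "\<dots> \<le> int (card L)"
    using sum_mono[of L "\<lambda>m. \<bar>moebius_mu m\<bar>" "\<lambda>_. 1"] abs_moebius_mu_le by simp
  moreover have "card L \<le> card {1..nat \<lfloor>y\<rfloor>}"
    by (rule card_mono) (auto simp: L_def S_def le_nat_floor)
  then have "real (card L) \<le> y" using y by simp linarith
  ultimately show ?thesis by linarith
qed

lemma of_nat_powr_minus_of_nat:
  "j \<noteq> 0 \<Longrightarrow> (of_nat n :: complex) powr (- of_nat j) = 1 / of_nat n ^ j"
  by (simp add: powr_minus powr_nat' divide_inverse)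

lemma summable_on_inverse_power:
  assumes "j \<ge> 2"
  shows "(\<lambda>n::nat. 1 / real n ^ j) summable_on A"
proof -
  have "summable (\<lambda>n::nat. norm (1 / real n ^ j))"
    using inverse_power_summable[OF assms] by (simp add: divide_inverse)
  then show ?thesis
    by (rule summable_on_subset_banach[OF norm_summable_imp_summable_on]) simp
qed

lemma abs_summable_on_divide_power:
  fixes c :: "nat \<Rightarrow> complex"
  assumes "j \<ge> 2" and "\<And>n. n \<in> A \<Longrightarrow> norm (c n) \<le> 1"
  shows "(\<lambda>n. norm (c n / of_nat n ^ j)) summable_on A"
proof (rule Infinite_Sum.abs_summable_on_comparison_test'[OF summable_on_inverse_power[OF assms(1)]])
  fix n assume "n \<in> A"
  then show "norm (c n / of_nat n ^ j) \<le> 1 / real n ^ j"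
    using assms(2) by (simp add: norm_divide norm_power divide_right_mono)
qed

lemma has_sum_zeta:
  assumes "j \<ge> 2"
  shows "((\<lambda>n. 1 / of_nat n ^ j) has_sum zeta (of_nat j)) {1..}"
proof -
  have "(\<lambda>n. 1 / of_nat n ^ j :: complex) summable_on {1..}"
    by (rule abs_summable_summable, rule abs_summable_on_divide_power) (use assms in auto)
  moreover have "zeta (of_nat j) = (\<Sum>\<^sub>\<infinity>n\<in>{1..}. 1 / of_nat n ^ j)"
    unfolding zeta_def using assms by (simp add: of_nat_powr_minus_of_nat)
  ultimately show ?thesis by (simp add: has_sum_infsum)
qed

lemma has_sum_f_tail:
  assumes "j \<ge> 2"
  shows "((\<lambda>m. of_int (moebius_mu m) / of_nat m ^ j) has_sum f_tail y (of_nat j)) {n. y < real n}"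
proof -
  have "(\<lambda>m. of_int (moebius_mu m) / of_nat m ^ j :: complex) summable_on {n. y < real n}"
    by (rule abs_summable_summable, rule abs_summable_on_divide_power)
      (use assms abs_moebius_mu_le in \<open>auto simp flip: of_int_abs\<close>)
  moreover have "f_tail y (of_nat j) = (\<Sum>\<^sub>\<infinity>m\<in>{n. y < real n}. of_int (moebius_mu m) / of_nat m ^ j)"
    unfolding f_tail_def using assms by (simp add: of_nat_powr_minus_of_nat)
  ultimately show ?thesis by (simp add: has_sum_infsum)
qed

lemma has_sum_diff:
  fixes f g :: "'a \<Rightarrow> 'b::topological_ab_group_add"
  assumes "(f has_sum a) A" and "(g has_sum b) A"
  shows "((\<lambda>x. f x - g x) has_sum a - b) A"
  using has_sum_add[OF assms(1), of "\<lambda>x. - g x" "- b"] assms(2) by (simp add: has_sum_uminus)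

lemma has_sum_mult_Times:
  fixes f g :: "_ \<Rightarrow> complex"
  assumes f: "(f has_sum a) A" and g: "(g has_sum b) B"
  shows "((\<lambda>(x, y). f x * g y) has_sum a * b) (A \<times> B)"
proof (rule has_sum_SigmaI)
  show "((\<lambda>y. case (x, y) of (x, y) \<Rightarrow> f x * g y) has_sum f x * b) B" for x
    using has_sum_cmult_right[OF g] by simp
  show "((\<lambda>x. f x * b) has_sum a * b) A"
    using has_sum_cmult_left[OF f] .
  have "f summable_on A" "g summable_on B"
    using f g by (auto simp: summable_on_def)
  then have nf: "(\<lambda>x. norm (f x)) summable_on A" and ng: "(\<lambda>y. norm (g y)) summable_on B"
    using summable_on_iff_abs_summable_on_complex by blast+
  have "(\<lambda>(x, y). norm (f x) * norm (g y)) summable_on A \<times> B"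
  proof (rule summable_on_SigmaI)
    show "((\<lambda>y. case (x, y) of (x, y) \<Rightarrow> norm (f x) * norm (g y)) has_sum
            norm (f x) * (\<Sum>\<^sub>\<infinity>y\<in>B. norm (g y))) B" for x
      using has_sum_cmult_right[OF has_sum_infsum[OF ng]] by simp
    show "(\<lambda>x. norm (f x) * (\<Sum>\<^sub>\<infinity>y\<in>B. norm (g y))) summable_on A"
      using nf by (rule summable_on_cmult_left)
  qed auto
  then have "(\<lambda>p. norm ((\<lambda>(x, y). f x * g y) p)) summable_on A \<times> B"
    by (simp add: case_prod_unfold norm_mult)
  then show "(\<lambda>(x, y). f x * g y) summable_on A \<times> B"
    by (rule abs_summable_summable)
qed

text \<open>Dirichlet convolution of zeta(s) with f_y(ks): the pair (n, m) contributes to the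
  coefficient of d = n m^k.\<close>
lemma has_sum_tail_coeff:
  assumes j: "j \<ge> 2" and k: "k \<ge> 1" and y: "y \<ge> 0"
  shows "((\<lambda>d. of_int (tail_coeff y k d) / of_nat d ^ j) has_sum
           zeta (of_nat j) * f_tail y (of_nat (k * j))) {1..}"
proof -
  define X where "X = zeta (of_nat j) * f_tail y (of_nat (k * j))"
  define M where "M d = {m. y < real m \<and> m^k dvd d}" for d
  define P where "P = (\<lambda>(n, m). 1 / of_nat n ^ j * (of_int (moebius_mu m) / of_nat m ^ (k * j)) :: complex)"
  define Q where "Q = (\<lambda>(d, m). of_int (moebius_mu m) / of_nat d ^ j :: complex)"
  have "k * j \<ge> 2" using mult_le_mono[OF k j] by simp
  then have "(P has_sum X) ({1..} \<times> {m. y < real m})"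
    unfolding P_def X_def by (rule has_sum_mult_Times[OF has_sum_zeta[OF j] has_sum_f_tail])
  moreover have "(Q has_sum X) (Sigma {1..} M) \<longleftrightarrow> (P has_sum X) ({1..} \<times> {m. y < real m})"
  proof (rule has_sum_reindex_bij_witness[where i="\<lambda>(n, m). (n * m^k, m)" and j="\<lambda>(d, m). (d div m^k, m)"])
    fix a :: "nat \<times> nat" assume "a \<in> Sigma {1..} M"
    then obtain d m where a: "a = (d, m)" "d \<ge> 1" "y < real m" "m^k dvd d"
      by (auto simp: M_def)
    then show "(\<lambda>(n, m). (n * m^k, m)) ((\<lambda>(d, m). (d div m^k, m)) a) = a" by simp
    have "d div m^k \<ge> 1" using a by (metis dvd_div_eq_0_iff less_one not_le)
    with a show "(\<lambda>(d, m). (d div m^k, m)) a \<in> {1..} \<times> {m. y < real m}" by simp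
    have "(of_nat d :: complex) = of_nat (d div m^k) * of_nat m ^ k"
      using a by (metis dvd_div_mult_self of_nat_mult of_nat_power)
    then have "(of_nat d ^ j :: complex) = of_nat (d div m^k) ^ j * of_nat m ^ (k * j)"
      by (simp add: power_mult_distrib power_mult)
    then show "P ((\<lambda>(d, m). (d div m^k, m)) a) = Q a"
      using a by (simp add: P_def Q_def)
  next
    fix b :: "nat \<times> nat" assume "b \<in> {1..} \<times> {m. y < real m}"
    then obtain n m where b: "b = (n, m)" "n \<ge> 1" "y < real m" by auto
    then have "m > 0" using y by (intro gr0I) auto
    with b show "(\<lambda>(d, m). (d div m^k, m)) ((\<lambda>(n, m). (n * m^k, m)) b) = b"
      and "(\<lambda>(n, m). (n * m^k, m)) b \<in> Sigma {1..} M"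
      by (auto simp: M_def)
  qed simp
  ultimately have "(Q has_sum X) (Sigma {1..} M)" by simp
  then show ?thesis unfolding X_def[symmetric]
  proof (rule has_sum_Sigma')
    fix d :: nat assume "d \<in> {1..}"
    then have "finite (M d)" unfolding M_def using finite_power_divisors k by simp
    then show "((\<lambda>m. Q (d, m)) has_sum of_int (tail_coeff y k d) / of_nat d ^ j) (M d)"
      by (intro has_sum_finiteI) (simp_all add: Q_def M_def tail_coeff_def sum_divide_distrib)
  qed
qed

lemma has_sum_scaled_tail:
  fixes c :: "nat \<Rightarrow> complex"
  assumes N: "N \<ge> 1" and below: "\<And>d. 1 \<le> d \<Longrightarrow> d < N \<Longrightarrow> c d = 0"
    and zero: "((\<lambda>d. c d / of_nat d ^ j) has_sum 0) {1..}"
  shows "((\<lambda>d. c d * of_real ((N / d) ^ j)) has_sum - c N) {N<..}"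
proof -
  have "((\<lambda>d. c d / of_nat d ^ j) has_sum 0) {N..}"
    using zero by (rule has_sum_cong_neutral[THEN iffD1, rotated -1]) (use below N in auto)
  then have "((\<lambda>d. of_nat N ^ j * (c d / of_nat d ^ j)) has_sum 0) {N..}"
    using has_sum_cmult_right by fastforce
  moreover have "of_nat N ^ j * (c d / of_nat d ^ j) = c d * of_real ((N / d) ^ j)" for d
    by (simp add: power_divide)
  ultimately have all: "((\<lambda>d. c d * of_real ((N / d) ^ j)) has_sum 0) {N..}" by simp
  have "((\<lambda>d. if d = N then c N else 0) has_sum c N) {N}"
    by (rule has_sum_finiteI) simp_all
  then have "((\<lambda>d. if d = N then c N else 0) has_sum c N) {N..}"
    by (rule has_sum_cong_neutral[THEN iffD1, rotated -1]) auto
  from has_sum_diff[OF all this]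
  have "((\<lambda>d. c d * of_real ((N / d) ^ j) - (if d = N then c N else 0)) has_sum - c N) {N..}"
    by simp
  then show ?thesis
    by (rule has_sum_cong_neutral[THEN iffD1, rotated -1]) (use N in auto)
qed

lemma norm_has_sum_power_le:
  fixes c :: "'a \<Rightarrow> complex"
  assumes summable: "(\<lambda>d. c d * of_real (r d ^ 2)) summable_on A"
    and r: "\<And>d. d \<in> A \<Longrightarrow> 0 \<le> r d \<and> r d \<le> q"
    and S: "((\<lambda>d. c d * of_real (r d ^ (i + 2))) has_sum S) A"
  shows "norm S \<le> (\<Sum>\<^sub>\<infinity>d\<in>A. norm (c d * of_real (r d ^ 2))) * q ^ i"
proof (rule norm_infsum_le[OF S has_sum_cmult_left[OF has_sum_infsum]])
  show "(\<lambda>d. norm (c d * of_real (r d ^ 2))) summable_on A"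
    using summable_on_iff_abs_summable_on_complex[THEN iffD1, OF summable] .
  fix d assume "d \<in> A"
  then have "r d ^ i \<le> q ^ i" using r by (intro power_mono) auto
  then have "r d ^ 2 * r d ^ i \<le> r d ^ 2 * q ^ i" by (rule mult_left_mono) simp
  then have "r d ^ (i + 2) \<le> r d ^ 2 * q ^ i" by (metis power_add mult.commute)
  moreover have norm_scale: "norm (c d * of_real x) = norm (c d) * x" if "x \<ge> 0" for x
    using that by (simp add: norm_mult)
  moreover have "0 \<le> r d" using r \<open>d \<in> A\<close> by blast
  ultimately show "norm (c d * of_real (r d ^ (i + 2))) \<le> norm (c d * of_real (r d ^ 2)) * q ^ i"
    by (simp only: norm_scale zero_le_power mult.assoc mult_left_mono norm_ge_zero)
qed

text \<open>If c vanishes below N, then - c N is the sum of c d (N/d)^j over d > N for every j \<ge> 2,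
  and (N/d)^j \<le> (N/(N+1))^(j-2) (N/d)^2 there, so c N = O((N/(N+1))^j).\<close>
lemma dirichlet_series_coeffs_eq_0:
  fixes c :: "nat \<Rightarrow> complex"
  assumes zero: "\<And>j. j \<ge> 2 \<Longrightarrow> ((\<lambda>d. c d / of_nat d ^ j) has_sum 0) {1..}"
  shows "d \<ge> 1 \<Longrightarrow> c d = 0"
proof (induction d rule: less_induct)
  case (less N)
  define r where "r d = real N / real d" for d
  define q where "q = real N / real (N + 1)"
  have tail: "((\<lambda>d. c d * of_real (r d ^ j)) has_sum - c N) {N<..}" if "j \<ge> 2" for j
    unfolding r_def using has_sum_scaled_tail[OF less.prems _ zero[OF that]] less.IH by simp
  have r: "0 \<le> r d \<and> r d \<le> q" if "d \<in> {N<..}" for d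
    using that less.prems by (auto simp: r_def q_def intro!: divide_left_mono)
  define K where "K = (\<Sum>\<^sub>\<infinity>d\<in>{N<..}. norm (c d * of_real (r d ^ 2)))"
  have "norm (c N) \<le> K * q ^ i" for i
    using norm_has_sum_power_le[OF has_sum_imp_summable[OF tail] r tail[of "i + 2"]]
    by (simp add: K_def)
  moreover have "(\<lambda>i. K * q ^ i) \<longlonglongrightarrow> K * 0"
    by (intro tendsto_mult tendsto_const LIMSEQ_power_zero) (auto simp: q_def)
  ultimately have "norm (c N) \<le> 0"
    by (intro LIMSEQ_le_const[of "\<lambda>i. K * q ^ i"]) auto
  then show ?case by simp
qed

theorem lemma1:
  fixes y :: real and k :: nat and a :: "nat \<Rightarrow> complex"
  assumes "y \<ge> 1" and "k \<ge> 2"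
    and "\<And>s. Re s > 1 \<Longrightarrow>
           ((\<lambda>d. a d * of_nat d powr (-s)) has_sum (zeta s * f_tail y (of_nat k * s))) {1..}"
  shows "\<forall>d\<ge>1. norm (a d) \<le> y"
proof (intro allI impI)
  fix d :: nat assume "d \<ge> 1"
  have k: "k \<ge> 1" and y: "y \<ge> 0" using assms by simp_all
  have "((\<lambda>d. (a d - of_int (tail_coeff y k d)) / of_nat d ^ j) has_sum 0) {1..}" if j: "j \<ge> 2" for j
  proof -
    have "((\<lambda>d. a d / of_nat d ^ j) has_sum zeta (of_nat j) * f_tail y (of_nat (k * j))) {1..}"
      using assms(3)[of "of_nat j"] j by (simp add: of_nat_powr_minus_of_nat)
    from has_sum_diff[OF this has_sum_tail_coeff[OF j k y]] show ?thesis
      by (simp add: diff_divide_distrib)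
  qed
  then have "a d = of_int (tail_coeff y k d)"
    using dirichlet_series_coeffs_eq_0[of "\<lambda>d. a d - of_int (tail_coeff y k d)"] \<open>d \<ge> 1\<close> by simp
  then show "norm (a d) \<le> y"
    using abs_tail_coeff_le[of y k d] assms \<open>d \<ge> 1\<close> by simp
qed

end
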